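(* Let $(\Sigma,\theta)$ be a topological space. The subword topology on $\Sigma^*$ is the least fixed point of the map $S$ sending a topology $\tau$ on $\Sigma^*$ to the topology generated by the sets $\uparrow_{\le^*}(UV)$ for $U,V\in\tau$, and $\uparrow_{\le^*}W$ for $W\in\theta$.
   Context: $\Sigma^*$ is the set of finite words; $UV$ is concatenation of sets of words; elements of $\Sigma$ are identified with one-letter words. $\le$ is the specialisation preorder of $\theta$ ($x\le y$ iff every open set containing $x$ contains $y$). Higman's ordering: $u\le^* w$ iff there is a strictly increasing $h:\{1,\dots,|u|\}\to\{1,\dots,|w|\}$ with $u_i\le w_{h(i)}$ for all $i$; $\uparrow_{\le^*}E$ is the upward closure of $E$. The subword topology on $\Sigma^*$ is generated by the sets $\Sigma^*U_1\Sigma^*\cdots\Sigma^*U_n\Sigma^*$ with $n\ge0$ and $U_i\in\theta$. *)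

theory Defs
  imports "HOL-Analysis.Analysis"
begin

definition spec_le :: "'a topology \<Rightarrow> 'a \<Rightarrow> 'a \<Rightarrow> bool" where
  "spec_le \<theta> x y \<longleftrightarrow> (\<forall>U. openin \<theta> U \<longrightarrow> x \<in> U \<longrightarrow> y \<in> U)"

definition higman_le :: "'a topology \<Rightarrow> 'a list \<Rightarrow> 'a list \<Rightarrow> bool" where
  "higman_le \<theta> u w \<longleftrightarrow>
     (\<exists>h. strict_mono_on {..<length u} h \<and> h ` {..<length u} \<subseteq> {..<length w} \<and>
          (\<forall>i<length u. spec_le \<theta> (u ! i) (w ! h i)))"

definition up_higman :: "'a topology \<Rightarrow> 'a list set \<Rightarrow> 'a list set" where
  "up_higman \<theta> E = {w. \<exists>u\<in>E. higman_le \<theta> u w}"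

definition conc :: "'a list set \<Rightarrow> 'a list set \<Rightarrow> 'a list set" where
  "conc U V = {u @ v | u v. u \<in> U \<and> v \<in> V}"

definition letters :: "'a set \<Rightarrow> 'a list set" where
  "letters W = {[a] | a. a \<in> W}"

definition gen_words :: "'a list set set \<Rightarrow> 'a list topology" where
  "gen_words B = topology_generated_by (insert UNIV B)"

fun pattern :: "'a set list \<Rightarrow> 'a list set" where
  "pattern [] = UNIV"
| "pattern (U # Us) = conc UNIV (conc (letters U) (pattern Us))"

definition subword_topology :: "'a topology \<Rightarrow> 'a list topology" where
  "subword_topology \<theta> = gen_words {pattern Us | Us. \<forall>U\<in>set Us. openin \<theta> U}"

definition S_map :: "'a topology \<Rightarrow> 'a list topology \<Rightarrow> 'a list topology" where
  "S_map \<theta> \<tau> = gen_words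
     ({up_higman \<theta> (conc U V) | U V. openin \<tau> U \<and> openin \<tau> V}
      \<union> {up_higman \<theta> (letters W) | W. openin \<theta> W})"

end

theory Submission
  imports Defs "HOL-Library.Sublist"
begin

text \<open>A pattern \<open>\<Sigma>*U\<^sub>1\<Sigma>* \<dots> \<Sigma>*U\<^sub>n\<Sigma>*\<close> with open letter sets is upward closed
  for Higman's ordering, because open sets are upward closed for the specialisation preorder.
  Hence \<open>\<Sigma>*U\<Sigma>*\<close> is the upward closure of \<open>U\<close>, and \<open>\<Sigma>*U\<^sub>1\<Sigma>* \<dots> U\<^sub>n\<Sigma>*\<close> is the
  upward closure of the product of \<open>\<Sigma>*U\<^sub>1\<Sigma>*\<close> and \<open>\<Sigma>*U\<^sub>2\<Sigma>* \<dots> U\<^sub>n\<Sigma>*\<close>. By induction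
  on \<open>n\<close>, every pattern is therefore open in every fixed point of \<open>S\<close>, and also in the image
  under \<open>S\<close> of the subword topology. Conversely, the patterns form a base of the subword
  topology, and if \<open>u \<in> P \<subseteq> A\<close> and \<open>v \<in> Q \<subseteq> B\<close> for patterns \<open>P\<close> and \<open>Q\<close>, then every word
  above \<open>uv\<close> lies in the pattern \<open>PQ\<close>, which is contained in the upward closure of \<open>AB\<close>.
  So \<open>S\<close> maps the subword topology into itself.\<close>

lemma conc_assoc: "conc (conc A B) C = conc A (conc B C)"
  unfolding conc_def by (auto, blast, metis append.assoc)

lemma in_pattern_Cons_iff:
  "w \<in> pattern (U # Us) \<longleftrightarrow> (\<exists>x a y. w = x @ a # y \<and> a \<in> U \<and> y \<in> pattern Us)"
  by (auto simp: conc_def letters_def) (blast, metis append_Cons append_Nil)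

declare pattern.simps(2) [simp del]

lemma append_in_pattern: "w \<in> pattern Us \<Longrightarrow> x @ w \<in> pattern Us"
  by (cases Us) (auto simp: in_pattern_Cons_iff, metis append.assoc)

lemma Nil_in_pattern_iff: "[] \<in> pattern Us \<longleftrightarrow> Us = []"
  by (cases Us) (auto simp: in_pattern_Cons_iff)

lemma Cons_in_pattern_Cons_iff:
  "a # w \<in> pattern (U # Us) \<longleftrightarrow> a \<in> U \<and> w \<in> pattern Us \<or> w \<in> pattern (U # Us)"
  by (auto simp: in_pattern_Cons_iff Cons_eq_append_conv)

lemma pattern_Cons_subset: "pattern (U # Us) \<subseteq> pattern Us"
  by (auto simp: in_pattern_Cons_iff intro: append_in_pattern[of _ _ "_ @ [_]", simplified])

lemma pattern_Cons_mono:
  "U \<subseteq> V \<Longrightarrow> pattern Us \<subseteq> pattern Vs \<Longrightarrow> pattern (U # Us) \<subseteq> pattern (V # Vs)"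
  unfolding in_pattern_Cons_iff subset_iff by blast

lemma pattern_append: "pattern (Us @ Vs) = conc (pattern Us) (pattern Vs)"
proof (induction Us)
  case Nil
  show ?case by (auto simp: conc_def intro: append_in_pattern)
next
  case (Cons U Us)
  then show ?case by (simp add: pattern.simps(2) conc_assoc)
qed

lemma Cons_in_patternE:
  assumes "a # w \<in> pattern Us"
  obtains (tail) "w \<in> pattern Us"
    | (head) U Us' where "Us = U # Us'" "a \<in> U" "w \<in> pattern Us'"
  using assms by (cases Us) (auto simp: Cons_in_pattern_Cons_iff)

lemma pattern_Int_refine:
  assumes Int: "\<And>U V. U \<in> \<U> \<Longrightarrow> V \<in> \<U> \<Longrightarrow> U \<inter> V \<in> \<U>"
    and "u \<in> pattern Us" "u \<in> pattern Vs" "Us \<in> lists \<U>" "Vs \<in> lists \<U>"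
  shows "\<exists>Ws\<in>lists \<U>. u \<in> pattern Ws \<and> pattern Ws \<subseteq> pattern Us \<inter> pattern Vs"
  using assms(2-)
proof (induction u arbitrary: Us Vs)
  case Nil
  then have "Us = []" "Vs = []"
    by (simp_all add: Nil_in_pattern_iff)
  then show ?case by (intro bexI[of _ "[]"]) auto
next
  case (Cons a w)
  note lists = Cons.prems(3,4)
  from Cons.prems(1) show ?case
  proof (cases rule: Cons_in_patternE)
    case Us: tail
    from Cons.prems(2) show ?thesis
    proof (cases rule: Cons_in_patternE)
      case Vs: tail
      with Us Cons.IH[of Us Vs] lists obtain Ws where
        "Ws \<in> lists \<U>" "w \<in> pattern Ws" "pattern Ws \<subseteq> pattern Us \<inter> pattern Vs"
        by blast
      then show ?thesis
        using append_in_pattern[of w Ws "[a]"] by auto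
    next
      case Vs: (head V Vs')
      with Us Cons.IH[of Us Vs'] lists obtain Ws where
        Ws: "Ws \<in> lists \<U>" "w \<in> pattern Ws" "pattern Ws \<subseteq> pattern Us \<inter> pattern Vs'"
        by auto
      have "pattern (V # Ws) \<subseteq> pattern Us \<inter> pattern Vs"
        using Ws(3) pattern_Cons_subset[of V Ws] pattern_Cons_mono[of V V Ws Vs'] Vs(1) by auto
      with Ws Vs lists show ?thesis
        by (intro bexI[of _ "V # Ws"]) (auto simp: Cons_in_pattern_Cons_iff)
    qed
  next
    case Us: (head U Us')
    from Cons.prems(2) show ?thesis
    proof (cases rule: Cons_in_patternE)
      case Vs: tail
      with Us Cons.IH[of Us' Vs] lists obtain Ws where
        Ws: "Ws \<in> lists \<U>" "w \<in> pattern Ws" "pattern Ws \<subseteq> pattern Us' \<inter> pattern Vs"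
        by auto
      have "pattern (U # Ws) \<subseteq> pattern Us \<inter> pattern Vs"
        using Ws(3) pattern_Cons_subset[of U Ws] pattern_Cons_mono[of U U Ws Us'] Us(1) by auto
      with Ws Us lists show ?thesis
        by (intro bexI[of _ "U # Ws"]) (auto simp: Cons_in_pattern_Cons_iff)
    next
      case Vs: (head V Vs')
      with Us Cons.IH[of Us' Vs'] lists obtain Ws where
        Ws: "Ws \<in> lists \<U>" "w \<in> pattern Ws" "pattern Ws \<subseteq> pattern Us' \<inter> pattern Vs'"
        by auto
      have "pattern ((U \<inter> V) # Ws) \<subseteq> pattern Us \<inter> pattern Vs"
        using Ws(3) pattern_Cons_mono[of "U \<inter> V" U Ws Us'] pattern_Cons_mono[of "U \<inter> V" V Ws Vs']
          Us(1) Vs(1) by auto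
      with Ws Us Vs lists Int show ?thesis
        by (intro bexI[of _ "(U \<inter> V) # Ws"]) (auto simp: Cons_in_pattern_Cons_iff)
    qed
  qed
qed

lemma higman_le_ConsD:
  assumes "higman_le \<theta> (a # u) w"
  obtains j where "j < length w" "spec_le \<theta> a (w ! j)" "higman_le \<theta> u (drop (Suc j) w)"
proof -
  obtain h where mono: "strict_mono_on {..<Suc (length u)} h"
    and range: "h ` {..<Suc (length u)} \<subseteq> {..<length w}"
    and le: "\<forall>i<Suc (length u). spec_le \<theta> ((a # u) ! i) (w ! h i)"
    using assms unfolding higman_le_def by auto
  have after: "h 0 < h (Suc i)" "h (Suc i) < length w" if "i < length u" for i
    using that mono range unfolding strict_mono_on_def image_subset_iff by auto
  have "higman_le \<theta> u (drop (Suc (h 0)) w)"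
    unfolding higman_le_def
  proof (intro exI[of _ "\<lambda>i. h (Suc i) - Suc (h 0)"] conjI allI impI)
    show "strict_mono_on {..<length u} (\<lambda>i. h (Suc i) - Suc (h 0))"
      unfolding strict_mono_on_def
    proof (intro allI impI)
      fix r s assume "r \<in> {..<length u} \<and> s \<in> {..<length u} \<and> r < s"
      then have "h 0 < h (Suc r)" "h (Suc r) < h (Suc s)"
        using mono after(1)[of r] unfolding strict_mono_on_def by auto
      then show "h (Suc r) - Suc (h 0) < h (Suc s) - Suc (h 0)"
        by linarith
    qed
    show "(\<lambda>i. h (Suc i) - Suc (h 0)) ` {..<length u} \<subseteq> {..<length (drop (Suc (h 0)) w)}"
      using after by (auto intro!: diff_less_mono simp: Suc_le_eq)
    show "spec_le \<theta> (u ! i) (drop (Suc (h 0)) w ! (h (Suc i) - Suc (h 0)))" if "i < length u" for i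
      using le that after[OF that] by auto
  qed
  moreover have "h 0 < length w" "spec_le \<theta> a (w ! h 0)"
    using range le by auto
  ultimately show thesis using that by blast
qed

lemma higman_le_imp_list_emb: "higman_le \<theta> u w \<Longrightarrow> list_emb (spec_le \<theta>) u w"
proof (induction u arbitrary: w)
  case (Cons a u)
  then obtain j where "j < length w" "spec_le \<theta> a (w ! j)" "higman_le \<theta> u (drop (Suc j) w)"
    by (blast elim: higman_le_ConsD)
  with Cons.IH have "list_emb (spec_le \<theta>) (a # u) (take j w @ w ! j # drop (Suc j) w)"
    by blast
  with \<open>j < length w\<close> show ?case by (simp add: id_take_nth_drop[symmetric])
qed simp

lemma higman_le_refl: "higman_le \<theta> u u"
  unfolding higman_le_def spec_le_def by (intro exI[of _ id]) (auto simp: strict_mono_on_def)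

lemma higman_le_singleton: "higman_le \<theta> [a] (x @ a # y)"
  unfolding higman_le_def spec_le_def by (intro exI[of _ "\<lambda>_. length x"]) (auto simp: strict_mono_on_def)

lemma up_higman_mono: "E \<subseteq> F \<Longrightarrow> up_higman \<theta> E \<subseteq> up_higman \<theta> F"
  unfolding up_higman_def by blast

lemma subset_up_higman: "E \<subseteq> up_higman \<theta> E"
  unfolding up_higman_def using higman_le_refl by blast

lemma pattern_upward_closed:
  assumes "u \<in> pattern Us" "list_emb (spec_le \<theta>) u w" "Us \<in> lists (Collect (openin \<theta>))"
  shows "w \<in> pattern Us"
  using assms
proof (induction Us arbitrary: u w)
  case (Cons U Us)
  then obtain x a y where u: "u = x @ a # y" and "a \<in> U" "y \<in> pattern Us"
    by (auto simp: in_pattern_Cons_iff)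
  from Cons.prems(2) obtain w1 w' where "w = w1 @ w'" "list_emb (spec_le \<theta>) (a # y) w'"
    unfolding u by (blast dest: list_emb_appendD)
  moreover from this(2) obtain w2 b w3 where
    "w' = w2 @ b # w3" "spec_le \<theta> a b" "list_emb (spec_le \<theta>) y w3"
    by (blast dest: list_emb_ConsD)
  moreover have "b \<in> U"
    using \<open>spec_le \<theta> a b\<close> \<open>a \<in> U\<close> Cons.prems(3) by (auto simp: spec_le_def)
  moreover have "w3 \<in> pattern Us"
    using Cons.IH \<open>y \<in> pattern Us\<close> \<open>list_emb (spec_le \<theta>) y w3\<close> Cons.prems(3) by simp
  ultimately have "w = (w1 @ w2) @ b # w3 \<and> b \<in> U \<and> w3 \<in> pattern Us"
    by simp
  then show ?case
    unfolding in_pattern_Cons_iff by blast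
qed simp

lemma up_higman_pattern:
  assumes "Us \<in> lists (Collect (openin \<theta>))"
  shows "up_higman \<theta> (pattern Us) = pattern Us"
proof
  show "up_higman \<theta> (pattern Us) \<subseteq> pattern Us"
    using pattern_upward_closed[OF _ higman_le_imp_list_emb assms] unfolding up_higman_def by blast
qed (rule subset_up_higman)

lemma up_higman_letters:
  assumes "openin \<theta> W"
  shows "up_higman \<theta> (letters W) = pattern [W]"
proof
  have "letters W \<subseteq> pattern [W]"
    by (auto simp: letters_def in_pattern_Cons_iff) (metis append_Nil)
  then have "up_higman \<theta> (letters W) \<subseteq> up_higman \<theta> (pattern [W])"
    by (rule up_higman_mono)
  also have "\<dots> = pattern [W]"
    using assms by (simp add: up_higman_pattern)
  finally show "up_higman \<theta> (letters W) \<subseteq> pattern [W]" .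
  show "pattern [W] \<subseteq> up_higman \<theta> (letters W)"
  proof
    fix w assume "w \<in> pattern [W]"
    then obtain x a y where "w = x @ a # y" "a \<in> W"
      by (auto simp: in_pattern_Cons_iff)
    then have "[a] \<in> letters W" "higman_le \<theta> [a] w"
      by (auto simp: letters_def higman_le_singleton)
    then show "w \<in> up_higman \<theta> (letters W)"
      unfolding up_higman_def by blast
  qed
qed

lemma pattern_Cons_eq_up_higman_conc:
  assumes "U # Us \<in> lists (Collect (openin \<theta>))"
  shows "pattern (U # Us) = up_higman \<theta> (conc (pattern [U]) (pattern Us))"
proof -
  have "conc (pattern [U]) (pattern Us) = pattern (U # Us)"
    using pattern_append[of "[U]" Us] by simp
  with up_higman_pattern[OF assms] show ?thesis
    by simp
qed

lemma openin_gen_words: "openin (gen_words B) A \<longleftrightarrow> generate_topology_on (insert UNIV B) A"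
  unfolding gen_words_def by (rule openin_topology_generated_by_iff)

lemma openin_gen_words_UNIV: "openin (gen_words B) UNIV"
  by (simp add: openin_gen_words generate_topology_on.Basis)

lemma openin_gen_words_generator: "b \<in> B \<Longrightarrow> openin (gen_words B) b"
  by (simp add: openin_gen_words generate_topology_on.Basis)

lemma openin_gen_words_coarsest:
  assumes "openin (gen_words B) A" "openin T UNIV" "\<And>b. b \<in> B \<Longrightarrow> openin T b"
  shows "openin T A"
  using generate_topology_on_coarsest[of "openin T" "insert UNIV B" A] assms
  by (auto simp: openin_gen_words istopology_openin)

lemma openin_gen_words_base_iff:
  assumes "UNIV \<in> B"
    and base: "\<And>b1 b2 x. b1 \<in> B \<Longrightarrow> b2 \<in> B \<Longrightarrow> x \<in> b1 \<inter> b2 \<Longrightarrow> \<exists>b\<in>B. x \<in> b \<and> b \<subseteq> b1 \<inter> b2"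
  shows "openin (gen_words B) A \<longleftrightarrow> (\<forall>x\<in>A. \<exists>b\<in>B. x \<in> b \<and> b \<subseteq> A)"
proof
  assume "openin (gen_words B) A"
  then have "generate_topology_on (insert UNIV B) A"
    by (simp add: openin_gen_words)
  then show "\<forall>x\<in>A. \<exists>b\<in>B. x \<in> b \<and> b \<subseteq> A"
  proof induction
    case Empty
    show ?case by simp
  next
    case (Int a a')
    show ?case
    proof
      fix x assume x: "x \<in> a \<inter> a'"
      obtain b where "b \<in> B" "x \<in> b" "b \<subseteq> a"
        using Int.IH(1) x by blast
      moreover obtain b' where "b' \<in> B" "x \<in> b'" "b' \<subseteq> a'"
        using Int.IH(2) x by blast
      ultimately show "\<exists>b\<in>B. x \<in> b \<and> b \<subseteq> a \<inter> a'"
        using base[of b b' x] by blast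
    qed
  next
    case (UN K)
    show ?case
    proof
      fix x assume "x \<in> \<Union>K"
      then obtain k where "k \<in> K" "x \<in> k"
        by blast
      with UN.IH obtain b where "b \<in> B" "x \<in> b" "b \<subseteq> k"
        by blast
      with \<open>k \<in> K\<close> show "\<exists>b\<in>B. x \<in> b \<and> b \<subseteq> \<Union>K"
        by blast
    qed
  next
    case (Basis s)
    then show ?case
      using assms(1) by auto
  qed
next
  assume "\<forall>x\<in>A. \<exists>b\<in>B. x \<in> b \<and> b \<subseteq> A"
  then have "A = \<Union>{b\<in>B. b \<subseteq> A}"
    by blast
  moreover have "openin (gen_words B) (\<Union>{b\<in>B. b \<subseteq> A})"
    by (rule openin_Union) (simp add: openin_gen_words_generator)
  ultimately show "openin (gen_words B) A"
    by simp
qed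

definition subword_basis :: "'a topology \<Rightarrow> 'a list set set" where
  "subword_basis \<theta> = pattern ` lists (Collect (openin \<theta>))"

lemma subword_topology_eq_gen_words: "subword_topology \<theta> = gen_words (subword_basis \<theta>)"
  unfolding subword_topology_def subword_basis_def
  by (rule arg_cong[of _ _ gen_words]) (auto simp: image_def)

lemma subword_basis_Int_refine:
  assumes "b1 \<in> subword_basis \<theta>" "b2 \<in> subword_basis \<theta>" "x \<in> b1 \<inter> b2"
  shows "\<exists>b\<in>subword_basis \<theta>. x \<in> b \<and> b \<subseteq> b1 \<inter> b2"
proof -
  obtain Us Vs where "Us \<in> lists (Collect (openin \<theta>))" "Vs \<in> lists (Collect (openin \<theta>))"
    and "b1 = pattern Us" "b2 = pattern Vs"
    using assms(1,2) unfolding subword_basis_def by blast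
  with pattern_Int_refine[of "Collect (openin \<theta>)" x Us Vs] assms(3)
  obtain Ws where "Ws \<in> lists (Collect (openin \<theta>))" "x \<in> pattern Ws" "pattern Ws \<subseteq> b1 \<inter> b2"
    by (auto simp: openin_Int)
  then show ?thesis
    unfolding subword_basis_def by blast
qed

lemma openin_subword_topology_iff:
  "openin (subword_topology \<theta>) A \<longleftrightarrow>
     (\<forall>u\<in>A. \<exists>Us\<in>lists (Collect (openin \<theta>)). u \<in> pattern Us \<and> pattern Us \<subseteq> A)"
proof -
  have "UNIV \<in> subword_basis \<theta>"
    unfolding subword_basis_def by (rule image_eqI[of _ _ "[]"]) simp_all
  then have "openin (subword_topology \<theta>) A \<longleftrightarrow> (\<forall>u\<in>A. \<exists>b\<in>subword_basis \<theta>. u \<in> b \<and> b \<subseteq> A)"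
    unfolding subword_topology_eq_gen_words
    by (rule openin_gen_words_base_iff) (rule subword_basis_Int_refine)
  then show ?thesis
    by (simp add: subword_basis_def)
qed

lemma openin_subword_pattern:
  assumes "Us \<in> lists (Collect (openin \<theta>))"
  shows "openin (subword_topology \<theta>) (pattern Us)"
  unfolding openin_subword_topology_iff using assms by (intro ballI bexI[of _ Us]) auto

lemma openin_subword_up_higman_conc:
  assumes "openin (subword_topology \<theta>) A" "openin (subword_topology \<theta>) B"
  shows "openin (subword_topology \<theta>) (up_higman \<theta> (conc A B))"
  unfolding openin_subword_topology_iff
proof
  fix w assume "w \<in> up_higman \<theta> (conc A B)"
  then obtain u v where "u \<in> A" "v \<in> B" "higman_le \<theta> (u @ v) w"
    unfolding up_higman_def conc_def by blast
  with assms obtain Us Vs where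
    Us: "Us \<in> lists (Collect (openin \<theta>))" "u \<in> pattern Us" "pattern Us \<subseteq> A" and
    Vs: "Vs \<in> lists (Collect (openin \<theta>))" "v \<in> pattern Vs" "pattern Vs \<subseteq> B"
    unfolding openin_subword_topology_iff by meson
  have "u @ v \<in> pattern (Us @ Vs)"
    using Us(2) Vs(2) by (auto simp: pattern_append conc_def)
  then have "w \<in> pattern (Us @ Vs)"
    by (rule pattern_upward_closed[OF _ higman_le_imp_list_emb[OF \<open>higman_le \<theta> (u @ v) w\<close>]])
      (use Us(1) Vs(1) in simp)
  moreover have "pattern (Us @ Vs) \<subseteq> up_higman \<theta> (conc A B)"
    using Us(3) Vs(3) subset_up_higman[of "conc A B" \<theta>]
    unfolding pattern_append conc_def by blast
  ultimately show "\<exists>Ws\<in>lists (Collect (openin \<theta>)). w \<in> pattern Ws \<and> pattern Ws \<subseteq> up_higman \<theta> (conc A B)"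
    using Us(1) Vs(1) by (intro bexI[of _ "Us @ Vs"]) auto
qed

lemma openin_S_map_UNIV: "openin (S_map \<theta> \<tau>) UNIV"
  unfolding S_map_def by (rule openin_gen_words_UNIV)

lemma openin_S_map_up_higman_conc:
  "openin \<tau> U \<Longrightarrow> openin \<tau> V \<Longrightarrow> openin (S_map \<theta> \<tau>) (up_higman \<theta> (conc U V))"
  unfolding S_map_def by (rule openin_gen_words_generator) blast

lemma openin_S_map_pattern_singleton: "openin \<theta> W \<Longrightarrow> openin (S_map \<theta> \<tau>) (pattern [W])"
  unfolding S_map_def up_higman_letters[symmetric] by (rule openin_gen_words_generator) blast

lemma openin_S_map_pattern_Cons:
  assumes "U # Us \<in> lists (Collect (openin \<theta>))" "openin \<tau> (pattern [U])" "openin \<tau> (pattern Us)"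
  shows "openin (S_map \<theta> \<tau>) (pattern (U # Us))"
  unfolding pattern_Cons_eq_up_higman_conc[OF assms(1)]
  using assms(2,3) by (rule openin_S_map_up_higman_conc)

lemma S_map_subword_topology: "S_map \<theta> (subword_topology \<theta>) = subword_topology \<theta>"
proof (rule topology_eq[THEN iffD2], intro allI iffI)
  fix A assume "openin (S_map \<theta> (subword_topology \<theta>)) A"
  then show "openin (subword_topology \<theta>) A"
    unfolding S_map_def
  proof (rule openin_gen_words_coarsest)
    show "openin (subword_topology \<theta>) UNIV"
      unfolding subword_topology_def by (rule openin_gen_words_UNIV)
  next
    fix b
    assume "b \<in> {up_higman \<theta> (conc U V) | U V.
                   openin (subword_topology \<theta>) U \<and> openin (subword_topology \<theta>) V}
              \<union> {up_higman \<theta> (letters W) | W. openin \<theta> W}"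
    then consider (conc) U V where "b = up_higman \<theta> (conc U V)"
        "openin (subword_topology \<theta>) U" "openin (subword_topology \<theta>) V"
      | (letters) W where "b = up_higman \<theta> (letters W)" "openin \<theta> W"
      by blast
    then show "openin (subword_topology \<theta>) b"
    proof cases
      case conc
      then show ?thesis by (simp add: openin_subword_up_higman_conc)
    next
      case letters
      then show ?thesis by (simp add: up_higman_letters openin_subword_pattern)
    qed
  qed
next
  fix A assume "openin (subword_topology \<theta>) A"
  then have "openin (gen_words (subword_basis \<theta>)) A"
    by (simp only: subword_topology_eq_gen_words)
  then show "openin (S_map \<theta> (subword_topology \<theta>)) A"
  proof (rule openin_gen_words_coarsest)
    fix b assume "b \<in> subword_basis \<theta>"
    then obtain Us where Us: "Us \<in> lists (Collect (openin \<theta>))" "b = pattern Us"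
      unfolding subword_basis_def by blast
    show "openin (S_map \<theta> (subword_topology \<theta>)) b"
    proof (cases Us)
      case Nil
      with Us(2) show ?thesis by (simp add: openin_S_map_UNIV)
    next
      case (Cons U Us')
      with Us show ?thesis
        by (auto intro!: openin_S_map_pattern_Cons openin_subword_pattern)
    qed
  qed (rule openin_S_map_UNIV)
qed

lemma subword_topology_least_fixpoint:
  assumes fixpoint: "S_map \<theta> \<tau> = \<tau>" and "openin (subword_topology \<theta>) A"
  shows "openin \<tau> A"
proof -
  have pattern_open: "openin \<tau> (pattern Us)" if "Us \<in> lists (Collect (openin \<theta>))" for Us
    using that
  proof (induction Us)
    case Nil
    show ?case
      using openin_S_map_UNIV[of \<theta> \<tau>] by (simp add: fixpoint)
  next
    case (Cons U Us)
    then show ?case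
      using openin_S_map_pattern_singleton[of \<theta> U \<tau>] openin_S_map_pattern_Cons[of U Us \<theta> \<tau>]
      by (simp add: fixpoint)
  qed
  from assms(2) show ?thesis
    unfolding subword_topology_eq_gen_words
  proof (rule openin_gen_words_coarsest)
    show "openin \<tau> UNIV"
      using pattern_open[of "[]"] by simp
    show "openin \<tau> b" if "b \<in> subword_basis \<theta>" for b
      using that pattern_open by (auto simp: subword_basis_def)
  qed
qed

theorem mainTheorem10:
  fixes \<theta> :: "'a topology"
  assumes "topspace \<theta> = UNIV"
  shows "S_map \<theta> (subword_topology \<theta>) = subword_topology \<theta> \<and>
         (\<forall>\<tau>. S_map \<theta> \<tau> = \<tau> \<longrightarrow>
              (\<forall>A. openin (subword_topology \<theta>) A \<longrightarrow> openin \<tau> A))"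
  using S_map_subword_topology subword_topology_least_fixpoint by blast

end
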